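(* Let $L$ be a finite set of axis-aligned line segments in the plane, let $\mathcal{C}$ be the collection of associated subsets of the rectangular cells of the arrangement of $L$, and let $k\ge 0$ be an integer. Let $\mathcal{C}_1$ be obtained from $\mathcal{C}$ by, for every pair of segments $\ell,\ell'$ both contained in more than $2k$ subsets of $\mathcal{C}$, adding the subset $\{\ell,\ell'\}$ and removing all subsets containing both $\ell$ and $\ell'$. Let $\mathcal{C}_2$ be obtained from $\mathcal{C}_1$ by, for each segment $\ell$ contained in more than $2k^2$ subsets of $\mathcal{C}_1$, replacing all these subsets by the subset $\{\ell\}$. If $|\mathcal{C}_2| > 2k^3$, then there is no cover of $\mathcal{C}$ of size at most $k$.
   Context: A cell of the arrangement of $L$ is a maximal connected region of the plane not intersected by any segment of $L$. A cell is rectangular if its boundary is formed by exactly four segments of $L$; its associated subset is the set of these four bounding segments. A set $L'\subseteq L$ is a cover of a collection $\mathcal{D}$ of subsets of $L$ if every member of $\mathcal{D}$ contains at least one element of $L'$. *)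

theory Defs
  imports "HOL-Analysis.Analysis"
begin

type_synonym point = "real \<times> real"

definition axis_segment :: "point set \<Rightarrow> bool" where
  "axis_segment s \<longleftrightarrow> (\<exists>a b. a \<noteq> b \<and> (fst a = fst b \<or> snd a = snd b) \<and> s = closed_segment a b)"

definition cells :: "point set set \<Rightarrow> point set set" where
  "cells L = components (- \<Union>L)"

text \<open>Segments of L forming (a non-degenerate part of) the boundary of a cell.\<close>
definition bounding_segments :: "point set set \<Rightarrow> point set \<Rightarrow> point set set" where
  "bounding_segments L c = {s \<in> L. infinite (s \<inter> frontier c)}"

definition rectangular_cell :: "point set set \<Rightarrow> point set \<Rightarrow> bool" where
  "rectangular_cell L c \<longleftrightarrow> c \<in> cells L \<and> bounded c \<and>
     card (bounding_segments L c) = 4 \<and> frontier c \<subseteq> \<Union>(bounding_segments L c)"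

definition rect_subsets :: "point set set \<Rightarrow> point set set set" where
  "rect_subsets L = {bounding_segments L c | c. rectangular_cell L c}"

definition is_cover :: "'a set \<Rightarrow> 'a set set \<Rightarrow> 'a set \<Rightarrow> bool" where
  "is_cover L' D L \<longleftrightarrow> L' \<subseteq> L \<and> (\<forall>S\<in>D. S \<inter> L' \<noteq> {})"

definition heavy_pair :: "nat \<Rightarrow> 'a set set \<Rightarrow> 'a \<Rightarrow> 'a \<Rightarrow> bool" where
  "heavy_pair k C l l' \<longleftrightarrow> l \<noteq> l' \<and> card {S \<in> C. l \<in> S \<and> l' \<in> S} > 2 * k"

definition reduce1 :: "nat \<Rightarrow> 'a set set \<Rightarrow> 'a set set" where
  "reduce1 k C = {S \<in> C. \<not> (\<exists>l l'. heavy_pair k C l l' \<and> l \<in> S \<and> l' \<in> S)}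
                 \<union> {{l, l'} | l l'. heavy_pair k C l l'}"

definition heavy_elem :: "nat \<Rightarrow> 'a set set \<Rightarrow> 'a \<Rightarrow> bool" where
  "heavy_elem k C l \<longleftrightarrow> card {S \<in> C. l \<in> S} > 2 * k ^ 2"

definition reduce2 :: "nat \<Rightarrow> 'a set set \<Rightarrow> 'a set set" where
  "reduce2 k C = {S \<in> C. \<not> (\<exists>l\<in>S. heavy_elem k C l)} \<union> {{l} | l. heavy_elem k C l}"

end

(*
  Every rectangular cell is an open box whose four bounding segments lie on its four side lines.
  If three distinct segments bound three cells, two of the segments are parallel, which fixes the
  extent of all three cells across them, and the third segment is a side of each cell; two of the
  cells then lie on the same side of it and overlap, which distinct cells cannot do. So any three
  segments lie together in at most two members of C.

  Now let L' be a cover with |L'| <= k. A heavy pair not met by L' would have its more than 2k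
  sets covered by the at most k elements of L', each lying in at most two of them. Hence L' also
  covers C1, in which every pair lies in at most 2k sets; so every element of C1 lying in more than
  2k^2 sets belongs to L', L' covers C2, and each element of L' lies in at most 2k^2 sets of C2.
  Therefore |C2| <= 2k^3.
*)

theory Submission
  imports Defs
begin

section \<open>Coordinates and axis-parallel segments\<close>

text \<open>The two coordinate axes are indexed by \<^typ>\<open>bool\<close>: \<open>coord True\<close> is the x- and
  \<open>coord False\<close> the y-coordinate, so every argument about one orientation of segments is made
  once for both.\<close>

definition coord :: "bool \<Rightarrow> point \<Rightarrow> real" where
  "coord d q = (if d then fst q else snd q)"

definition coord_line :: "bool \<Rightarrow> real \<Rightarrow> point set" where
  "coord_line d t = {q. coord d q = t}"

definition axis_vec :: "bool \<Rightarrow> point" where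
  "axis_vec d = (if d then (1, 0) else (0, 1))"

lemma coord_add [simp]: "coord d (p + q) = coord d p + coord d q"
  by (simp add: coord_def)

lemma coord_diff [simp]: "coord d (p - q) = coord d p - coord d q"
  by (simp add: coord_def)

lemma coord_scaleR [simp]: "coord d (t *\<^sub>R q) = t * coord d q"
  by (simp add: coord_def)

lemma coord_axis_vec [simp]: "coord d (axis_vec d') = (if d = d' then 1 else 0)"
  by (simp add: coord_def axis_vec_def)

lemma axis_vec_nonzero [simp]: "axis_vec d \<noteq> 0"
  by (simp add: axis_vec_def zero_prod_def)

lemma coord_Pair [simp]: "coord d (x True, x False) = x d"
  by (simp add: coord_def)

lemma point_eq_iff_coords: "p = q \<longleftrightarrow> coord d p = coord d q \<and> coord (\<not> d) p = coord (\<not> d) q"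
  by (cases d) (auto simp: coord_def prod_eq_iff)

lemma axis_segment_closed: "axis_segment s \<Longrightarrow> closed s"
  by (auto simp: axis_segment_def)

lemma axis_segment_nonempty: "axis_segment s \<Longrightarrow> s \<noteq> {}"
  by (auto simp: axis_segment_def)

lemma axis_segment_subset_coord_line:
  assumes "axis_segment s"
  obtains d t where "s \<subseteq> coord_line d t"
proof -
  obtain a b d where ab: "s = closed_segment a b" "coord d a = coord d b"
    using assms unfolding axis_segment_def coord_def by (metis (full_types))
  have "s \<subseteq> coord_line d (coord d a)"
  proof
    fix x assume "x \<in> s"
    then obtain u where "x = (1 - u) *\<^sub>R a + u *\<^sub>R b" using ab by (auto simp: in_segment)
    then have "coord d x = (1 - u) * coord d a + u * coord d b" by simp
    then show "x \<in> coord_line d (coord d a)"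
      using ab by (simp add: coord_line_def algebra_simps)
  qed
  then show thesis by (rule that)
qed

lemma axis_segment_coord_line_unique:
  assumes "axis_segment s" "s \<subseteq> coord_line d t" "s \<subseteq> coord_line d' t'"
  shows "d' = d \<and> t' = t"
proof -
  obtain a b where "a \<noteq> b" "a \<in> s" "b \<in> s"
    using assms(1) unfolding axis_segment_def by auto
  with assms(2,3) show ?thesis
    by (cases "d' = d") (auto simp: coord_line_def point_eq_iff_coords[of a b d])
qed

lemma finite_coord_lines:
  assumes "finite B" "\<And>s. s \<in> B \<Longrightarrow> s \<noteq> {}"
  shows "finite {t. \<exists>s\<in>B. s \<subseteq> coord_line d t}"
proof (rule finite_subset)
  show "{t. \<exists>s\<in>B. s \<subseteq> coord_line d t} \<subseteq> (\<lambda>s. coord d (SOME q. q \<in> s)) ` B"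
  proof
    fix t assume "t \<in> {t. \<exists>s\<in>B. s \<subseteq> coord_line d t}"
    then obtain s where s: "s \<in> B" "s \<subseteq> coord_line d t" by blast
    then have "(SOME q. q \<in> s) \<in> s" using assms(2) by (simp add: some_in_eq)
    with s show "t \<in> (\<lambda>s. coord d (SOME q. q \<in> s)) ` B" by (auto simp: coord_line_def)
  qed
qed (use assms in simp)

lemma open_avoids_finite_coord_sets:
  assumes "open S" "S \<noteq> {}" "\<And>d. finite (X d)"
  obtains p where "p \<in> S" "\<And>d. coord d p \<notin> X d"
proof -
  obtain z where "z \<in> S" using assms(2) by blast
  then obtain A B where AB: "open A" "open B" "z \<in> A \<times> B" "A \<times> B \<subseteq> S"
    using assms(1) open_prod_elim by metis
  have avoid: "\<exists>x\<in>U. x \<notin> X d" if "open U" "U \<noteq> {}" for U :: "real set" and d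
    using finite_imp_not_open[of U] finite_subset[OF _ assms(3)[of d]] that by blast
  obtain x y where "x \<in> A" "x \<notin> X True" "y \<in> B" "y \<notin> X False"
    using avoid[of A True] avoid[of B False] AB by blast
  then show thesis
    using that[of "(x, y)"] AB(4) by (auto simp: coord_def split: if_splits)
qed

lemma open_bounded_ray_meets_frontier:
  fixes c :: "'a::real_normed_vector set"
  assumes oc: "open c" and bc: "bounded c" and pc: "p \<in> c" and v: "v \<noteq> 0"
  obtains t where "t > 0" "p + t *\<^sub>R v \<in> frontier c"
proof -
  define ray where "ray = (\<lambda>t. p + t *\<^sub>R v) ` {0..}"
  have "connected ray"
    unfolding ray_def by (intro connected_continuous_image continuous_intros) simp
  moreover have "ray \<inter> c \<noteq> {}"
    using pc unfolding ray_def by (auto intro!: image_eqI[of _ _ 0])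
  moreover have "ray - c \<noteq> {}"
  proof -
    obtain B where B: "\<And>x. x \<in> c \<Longrightarrow> norm x \<le> B" using bc bounded_iff by metis
    define t where "t = (B + norm p + 1) / norm v"
    have tv: "t * norm v = B + norm p + 1"
      using v by (simp add: t_def)
    have "t \<ge> 0"
      unfolding t_def using norm_ge_zero[of p] B[OF pc] by (intro divide_nonneg_nonneg norm_ge_zero) linarith
    have "norm (t *\<^sub>R v) \<le> norm (p + t *\<^sub>R v) + norm p"
      by (metis add_diff_cancel_left' norm_triangle_ineq4)
    with tv \<open>t \<ge> 0\<close> have "p + t *\<^sub>R v \<notin> c" using B by force
    with \<open>t \<ge> 0\<close> show ?thesis unfolding ray_def by blast
  qed
  ultimately obtain t where t: "t \<ge> 0" "p + t *\<^sub>R v \<in> frontier c"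
    using connected_Int_frontier[of ray c] unfolding ray_def by auto
  moreover have "t \<noteq> 0"
    using t(2) pc frontier_disjoint_eq[of c] oc by auto
  ultimately show thesis using that[of t] by simp
qed

section \<open>Rectangular cells are boxes\<close>

definition open_box :: "(bool \<Rightarrow> bool \<Rightarrow> real) \<Rightarrow> point set" where
  "open_box b = {q. \<forall>d. b d False < coord d q \<and> coord d q < b d True}"

definition box_frame :: "point set set \<Rightarrow> (bool \<Rightarrow> bool \<Rightarrow> real) \<Rightarrow> bool" where
  "box_frame T b \<longleftrightarrow> (\<forall>d. b d False < b d True) \<and>
     (\<forall>h\<in>T. \<forall>d t. h \<subseteq> coord_line d t \<longrightarrow> (\<exists>e. t = b d e)) \<and>
     (\<forall>h\<in>T. \<forall>h'\<in>T. \<forall>d t. h \<subseteq> coord_line d t \<longrightarrow> h' \<subseteq> coord_line d t \<longrightarrow> h = h')"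

lemma open_box_eq_Times:
  "open_box b = {b True False<..<b True True} \<times> {b False False<..<b False True}"
  by (auto simp: open_box_def coord_def all_bool_eq)

lemma connected_open_box: "connected (open_box b)"
  by (simp add: open_box_eq_Times convex_connected convex_Times)

lemma component_complement_open:
  assumes "finite L" "\<forall>s\<in>L. axis_segment s" "c \<in> components (- \<Union>L)"
  shows "open c"
proof -
  have "closed (\<Union>L)" using assms(1,2) axis_segment_closed by (intro closed_Union) auto
  then show ?thesis using open_components[OF open_Compl assms(3)] by blast
qed

lemma frontier_point_on_crossing_segment:
  assumes "frontier c \<subseteq> \<Union>B" "\<forall>s\<in>B. axis_segment s"
    and "coord (\<not> d) p \<notin> {t. \<exists>s\<in>B. s \<subseteq> coord_line (\<not> d) t}"
    and "q \<in> frontier c" "coord (\<not> d) q = coord (\<not> d) p"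
  shows "\<exists>s\<in>B. s \<subseteq> coord_line d (coord d q)"
proof -
  obtain s where s: "s \<in> B" "q \<in> s" using assms(1,4) by auto
  obtain d' t where st: "s \<subseteq> coord_line d' t"
    using axis_segment_subset_coord_line assms(2) s(1) by blast
  then have t: "t = coord d' q" using s(2) by (auto simp: coord_line_def)
  show ?thesis
  proof (cases "d' = d")
    case True
    with st t s(1) show ?thesis by blast
  next
    case False
    then have "d' = (\<not> d)" by auto
    with st t assms(5) have "s \<subseteq> coord_line (\<not> d) (coord (\<not> d) p)" by simp
    with s(1) assms(3) show ?thesis by blast
  qed
qed

lemma box_frame_of_sides:
  assumes "finite B" "card B = 4" "\<forall>s\<in>B. axis_segment s"
    and b_lt: "\<And>d. b d False < b d True"
    and side: "\<And>d e. side d e \<in> B" "\<And>d e. side d e \<subseteq> coord_line d (b d e)"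
  shows "box_frame B b"
proof -
  have b_inj: "e = e'" if "b d e = b d e'" for d e e'
    using that b_lt[of d] by (cases e; cases e') auto
  have side_line: "d' = d \<and> t = b d e" if "side d e \<subseteq> coord_line d' t" for d e d' t
    using axis_segment_coord_line_unique[OF _ side(2) that] assms(3) side(1) by simp
  \<comment> \<open>The four sides are pairwise distinct, so by cardinality they exhaust \<open>B\<close>.\<close>
  have "inj (\<lambda>(d, e). side d e)"
  proof (rule injI)
    fix x y :: "bool \<times> bool" assume eq: "(\<lambda>(d, e). side d e) x = (\<lambda>(d, e). side d e) y"
    obtain d e d' e' where xy: "x = (d, e)" "y = (d', e')" by fastforce
    with eq have "side d' e' \<subseteq> coord_line d (b d e)" using side(2)[of d e] by simp
    then have "d = d' \<and> b d e = b d' e'" by (rule side_line)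
    with xy b_inj[of d e e'] show "x = y" by auto
  qed
  then have "card (range (\<lambda>(d, e). side d e)) = 4"
    by (simp add: card_image card_UNIV_bool)
  then have B_sides: "B = range (\<lambda>(d, e). side d e)"
    using assms(1,2) side(1) by (intro card_subset_eq[symmetric]) auto
  have on_side: "d = d' \<and> t = b d' e" if "h \<in> B" "h \<subseteq> coord_line d t" "h = side d' e" for h d t d' e
    using side_line[of d' e d t] that(2,3) by simp
  show ?thesis
    unfolding box_frame_def
  proof (intro conjI ballI allI impI)
    fix h d t assume "h \<in> B" "h \<subseteq> coord_line d t"
    moreover obtain d' e where "h = side d' e" using \<open>h \<in> B\<close> B_sides by auto
    ultimately show "\<exists>e. t = b d e" using on_side by blast
  next
    fix h h' d t assume h: "h \<in> B" "h' \<in> B" "h \<subseteq> coord_line d t" "h' \<subseteq> coord_line d t"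
    obtain d1 e1 d2 e2 where hh: "h = side d1 e1" "h' = side d2 e2" using h(1,2) B_sides by auto
    have "d = d1 \<and> t = b d1 e1" "d = d2 \<and> t = b d2 e2"
      using on_side[OF h(1,3) hh(1)] on_side[OF h(2,4) hh(2)] .
    then have "d1 = d2" "e1 = e2" using b_inj[of d e1 e2] by auto
    then show "h = h'" using hh by simp
  qed (use b_lt in auto)
qed

lemma box_frameD:
  assumes "box_frame T b"
  shows "b d False < b d True"
    and "h \<in> T \<Longrightarrow> h \<subseteq> coord_line d t \<Longrightarrow> \<exists>e. t = b d e"
    and "h \<in> T \<Longrightarrow> h' \<in> T \<Longrightarrow> h \<subseteq> coord_line d t \<Longrightarrow> h' \<subseteq> coord_line d t \<Longrightarrow> h = h'"
  using assms unfolding box_frame_def by blast+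

lemma open_box_subset_component:
  assumes "box_frame B b" "\<forall>s\<in>B. axis_segment s" "frontier c \<subseteq> \<Union>B"
    and "p \<in> c" "p \<in> open_box b"
  shows "open_box b \<subseteq> c"
proof -
  have "q \<notin> h" if q: "q \<in> open_box b" and h: "h \<in> B" for q h
  proof
    assume "q \<in> h"
    obtain d t where "h \<subseteq> coord_line d t"
      using axis_segment_subset_coord_line assms(2) h by blast
    moreover from this obtain e where "t = b d e"
      using box_frameD(2)[OF assms(1) h] by blast
    ultimately have "coord d q = b d e" using \<open>q \<in> h\<close> by (auto simp: coord_line_def)
    moreover have "b d False < coord d q \<and> coord d q < b d True"
      using q by (simp add: open_box_def)
    ultimately show False by (cases e) auto
  qed
  then have "open_box b \<inter> frontier c = {}" using assms(3) by blast
  then have "open_box b - c = {}"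
    using connected_Int_frontier[OF connected_open_box, of b c] assms(4,5) by blast
  then show ?thesis by blast
qed

lemma rectangular_cell_box:
  assumes fin: "finite L" and ax: "\<forall>s\<in>L. axis_segment s" and rc: "rectangular_cell L c"
  obtains b where "box_frame (bounding_segments L c) b" "open_box b \<subseteq> c"
proof -
  define B where "B = bounding_segments L c"
  have "B \<subseteq> L" by (auto simp: B_def bounding_segments_def)
  then have finB: "finite B" and axB: "\<forall>s\<in>B. axis_segment s"
    using fin ax finite_subset by auto
  have card4: "card B = 4" and frB: "frontier c \<subseteq> \<Union>B" and bc: "bounded c"
    and cc: "c \<in> components (- \<Union>L)"
    using rc by (auto simp: rectangular_cell_def cells_def B_def)
  have oc: "open c" by (rule component_complement_open[OF fin ax cc])
  have "finite {t. \<exists>s\<in>B. s \<subseteq> coord_line d t}" for d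
    using finB axB axis_segment_nonempty by (intro finite_coord_lines) auto
  then obtain p where pc: "p \<in> c" and pX: "\<And>d. coord d p \<notin> {t. \<exists>s\<in>B. s \<subseteq> coord_line d t}"
    using open_avoids_finite_coord_sets[OF oc in_components_nonempty[OF cc],
        of "\<lambda>d. {t. \<exists>s\<in>B. s \<subseteq> coord_line d t}"]
    by blast
  \<comment> \<open>The box is cut out by the first frontier points met when leaving \<open>p\<close> along the four
    axis directions, indexed by an axis and a sign.\<close>
  have ray_exit: "\<exists>r>0. p + r *\<^sub>R ((if e then 1 else -1) *\<^sub>R axis_vec d) \<in> frontier c" for d e
  proof -
    have "(if e then 1 else -1) *\<^sub>R axis_vec d \<noteq> 0" by simp
    then show ?thesis using open_bounded_ray_meets_frontier[OF oc bc pc] by blast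
  qed
  define r where
    "r d e = (SOME r. r > 0 \<and> p + r *\<^sub>R ((if e then 1 else -1) *\<^sub>R axis_vec d) \<in> frontier c)"
    for d e
  have r: "r d e > 0" "p + r d e *\<^sub>R ((if e then 1 else -1) *\<^sub>R axis_vec d) \<in> frontier c" for d e
    using someI_ex[OF ray_exit[where d = d and e = e]] unfolding r_def by auto
  define b where "b d e = coord d p + (if e then r d e else - r d e)" for d e
  have side_ex: "\<exists>s. s \<in> B \<and> s \<subseteq> coord_line d (b d e)" for d e
    using frontier_point_on_crossing_segment[where d = d, OF frB axB pX r(2)[of d e]]
    by (cases e) (auto simp: b_def)
  define side where "side d e = (SOME s. s \<in> B \<and> s \<subseteq> coord_line d (b d e))" for d e
  have side: "side d e \<in> B" "side d e \<subseteq> coord_line d (b d e)" for d e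
    using someI_ex[OF side_ex[of d e]] unfolding side_def by auto
  have b_lt: "b d False < b d True" for d
    using r(1)[of d False] r(1)[of d True] by (simp add: b_def)
  have frame: "box_frame B b"
    using box_frame_of_sides[OF finB card4 axB b_lt side] .
  moreover have "p \<in> open_box b"
    using r(1) by (auto simp: open_box_def b_def)
  ultimately have "open_box b \<subseteq> c"
    by (rule open_box_subset_component[OF _ axB frB pc])
  with frame show thesis using that B_def by blast
qed

section \<open>Three segments bound at most two rectangular cells\<close>

lemma box_frame_parallel_pair:
  assumes "box_frame T b" "h \<in> T" "h' \<in> T" "h \<noteq> h'" "h \<subseteq> coord_line d t" "h' \<subseteq> coord_line d t'"
  shows "b d False = min t t' \<and> b d True = max t t'"
proof -
  obtain e e' where "t = b d e" "t' = b d e'"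
    using box_frameD(2)[OF assms(1)] assms(2,3,5,6) by metis
  moreover have "t \<noteq> t'"
    using box_frameD(3)[OF assms(1) assms(2,3)] assms(4-6) by blast
  ultimately show ?thesis
    using box_frameD(1)[OF assms(1), of d] by (cases e; cases e') auto
qed

lemma box_frame_no_parallel_triple:
  assumes "box_frame T b" "h1 \<in> T" "h2 \<in> T" "h3 \<in> T" "h1 \<noteq> h2" "h1 \<noteq> h3" "h2 \<noteq> h3"
    "h1 \<subseteq> coord_line d t1" "h2 \<subseteq> coord_line d t2" "h3 \<subseteq> coord_line d t3"
  shows False
proof -
  obtain e1 e2 e3 where "t1 = b d e1" "t2 = b d e2" "t3 = b d e3"
    using box_frameD(2)[OF assms(1)] assms(2-4,8-10) by metis
  moreover have "t1 \<noteq> t2" "t1 \<noteq> t3" "t2 \<noteq> t3"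
    using box_frameD(3)[OF assms(1)] assms(2-10) by blast+
  ultimately show False by (cases e1; cases e2; cases e3) auto
qed

lemma intervals_meet_at_common_end:
  fixes f g :: "bool \<Rightarrow> real"
  assumes "f False < f True" "g False < g True" "f e = g e"
  shows "\<exists>x. f False < x \<and> x < f True \<and> g False < x \<and> x < g True"
proof -
  define \<delta> where "\<delta> = min (f True - f False) (g True - g False) / 2"
  have \<delta>: "0 < \<delta>" "\<delta> < f True - f False" "\<delta> < g True - g False"
    using assms(1,2) by (auto simp: \<delta>_def)
  show ?thesis
  proof (cases e)
    case True
    then have "f True = g True" using assms(3) by simp
    with \<delta> show ?thesis by (intro exI[of _ "f True - \<delta>"]) auto
  next
    case False
    then have "f False = g False" using assms(3) by simp
    with \<delta> show ?thesis by (intro exI[of _ "f False + \<delta>"]) auto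
  qed
qed

lemma open_box_Int_nonempty:
  assumes "\<And>d. \<exists>x. b d False < x \<and> x < b d True \<and> b' d False < x \<and> x < b' d True"
  shows "open_box b \<inter> open_box b' \<noteq> {}"
proof -
  define x where "x d = (SOME x. b d False < x \<and> x < b d True \<and> b' d False < x \<and> x < b' d True)"
    for d
  have "b d False < x d \<and> x d < b d True \<and> b' d False < x d \<and> x d < b' d True" for d
    unfolding x_def by (rule someI_ex) (rule assms)
  then have "(x True, x False) \<in> open_box b \<inter> open_box b'"
    by (simp add: open_box_def)
  then show ?thesis by blast
qed

definition cell_box :: "point set set \<Rightarrow> point set set \<Rightarrow> (bool \<Rightarrow> bool \<Rightarrow> real) \<Rightarrow> bool" where
  "cell_box L T b \<longleftrightarrow> box_frame T b \<and>
     (\<exists>c\<in>components (- \<Union>L). T = bounding_segments L c \<and> open_box b \<subseteq> c)"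

lemma rect_subsets_subset: "T \<in> rect_subsets L \<Longrightarrow> T \<subseteq> L"
  by (auto simp: rect_subsets_def bounding_segments_def)

lemma rect_subsets_cell_box:
  assumes "finite L" "\<forall>s\<in>L. axis_segment s" "T \<in> rect_subsets L"
  obtains b where "cell_box L T b"
proof -
  obtain c where rc: "rectangular_cell L c" and T: "T = bounding_segments L c"
    using assms(3) by (auto simp: rect_subsets_def)
  then have "c \<in> components (- \<Union>L)" by (simp add: rectangular_cell_def cells_def)
  moreover obtain b where "box_frame T b" "open_box b \<subseteq> c"
    using rectangular_cell_box[OF assms(1,2) rc] T by blast
  ultimately show thesis using that[of b] T unfolding cell_box_def by blast
qed

lemma cell_box_eq_if_meet:
  assumes "cell_box L T b" "cell_box L T' b'" "open_box b \<inter> open_box b' \<noteq> {}"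
  shows "T = T'"
proof -
  obtain c c' where c: "c \<in> components (- \<Union>L)" "T = bounding_segments L c" "open_box b \<subseteq> c"
    and c': "c' \<in> components (- \<Union>L)" "T' = bounding_segments L c'" "open_box b' \<subseteq> c'"
    using assms(1,2) unfolding cell_box_def by blast
  have "c \<inter> c' \<noteq> {}" using assms(3) c(3) c'(3) by blast
  then have "c = c'" using components_eq[OF c(1) c'(1)] by blast
  with c(2) c'(2) show ?thesis by simp
qed

lemma card_le_CARD_if_classified:
  fixes R :: "'a \<Rightarrow> 'b::finite \<Rightarrow> bool"
  assumes "\<And>x. x \<in> A \<Longrightarrow> \<exists>y. R x y"
    and "\<And>x x' y. x \<in> A \<Longrightarrow> x' \<in> A \<Longrightarrow> R x y \<Longrightarrow> R x' y \<Longrightarrow> x = x'"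
  shows "card A \<le> CARD('b)"
proof -
  have "inj_on (\<lambda>x. SOME y. R x y) A"
    by (rule inj_onI) (metis assms someI_ex)
  then show ?thesis by (rule card_inj_on_le[where B = UNIV]) auto
qed

lemma card_cell_boxes_through_segments_le_2:
  assumes cells: "\<And>T. T \<in> A \<Longrightarrow> \<exists>b. cell_box L T b"
    and mem: "\<And>T. T \<in> A \<Longrightarrow> h \<in> T \<and> h' \<in> T \<and> g \<in> T"
    and "h \<noteq> h'" "h \<subseteq> coord_line d t" "h' \<subseteq> coord_line d t'" "g \<subseteq> coord_line (\<not> d) s"
  shows "card A \<le> 2"
proof -
  \<comment> \<open>Classify each cell by the side of its box carrying \<open>g\<close>; within a class the boxes have
    the same extent along \<open>d\<close> and a common end along \<open>\<not> d\<close>, so they overlap.\<close>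
  have "card A \<le> CARD(bool)"
  proof (rule card_le_CARD_if_classified[where R = "\<lambda>T e. \<exists>b. cell_box L T b \<and> s = b (\<not> d) e"])
    fix T assume "T \<in> A"
    then obtain b where b: "cell_box L T b" using cells by blast
    then have "\<exists>e. s = b (\<not> d) e"
      using mem[OF \<open>T \<in> A\<close>] assms(6) by (auto simp: cell_box_def dest: box_frameD(2))
    with b show "\<exists>e b. cell_box L T b \<and> s = b (\<not> d) e" by blast
  next
    fix T T' e
    assume "T \<in> A" "T' \<in> A" "\<exists>b. cell_box L T b \<and> s = b (\<not> d) e"
      "\<exists>b. cell_box L T' b \<and> s = b (\<not> d) e"
    then obtain b b' where bb: "cell_box L T b" "cell_box L T' b'" "b (\<not> d) e = b' (\<not> d) e"
      by metis
    then have fr: "box_frame T b" "box_frame T' b'" by (simp_all add: cell_box_def)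
    have "b d False = b' d False"
      using box_frame_parallel_pair[OF fr(1), of h h' d t t'] box_frame_parallel_pair[OF fr(2), of h h' d t t']
        mem[OF \<open>T \<in> A\<close>] mem[OF \<open>T' \<in> A\<close>] assms(3-5) by auto
    have "\<exists>x. b d' False < x \<and> x < b d' True \<and> b' d' False < x \<and> x < b' d' True" for d'
    proof (cases "d' = d")
      case True
      have "\<exists>x. b d False < x \<and> x < b d True \<and> b' d False < x \<and> x < b' d True"
        by (rule intervals_meet_at_common_end[of "b d" "b' d" False])
          (use box_frameD(1)[OF fr(1), of d] box_frameD(1)[OF fr(2), of d]
            \<open>b d False = b' d False\<close> in auto)
      with True show ?thesis by simp
    next
      case False
      then have "d' = (\<not> d)" by auto
      then show ?thesis
        by (intro intervals_meet_at_common_end[of "b d'" "b' d'" e])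
          (use box_frameD(1)[OF fr(1), of d'] box_frameD(1)[OF fr(2), of d'] bb(3) in auto)
    qed
    then show "T = T'" using cell_box_eq_if_meet[OF bb(1,2)] open_box_Int_nonempty by blast
  qed
  then show ?thesis by simp
qed

lemma card_rect_subsets_through_three_le_2:
  assumes fin: "finite L" and ax: "\<forall>s\<in>L. axis_segment s"
    and distinct: "h1 \<noteq> h2" "h1 \<noteq> h3" "h2 \<noteq> h3"
  shows "card {T \<in> rect_subsets L. h1 \<in> T \<and> h2 \<in> T \<and> h3 \<in> T} \<le> 2" (is "card ?A \<le> 2")
proof (cases "?A = {}")
  case True
  then show ?thesis by (metis card.empty zero_le)
next
  case False
  then obtain T0 where T0: "T0 \<in> rect_subsets L" "h1 \<in> T0" "h2 \<in> T0" "h3 \<in> T0" by blast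
  then have "axis_segment h1" "axis_segment h2" "axis_segment h3"
    using rect_subsets_subset ax by blast+
  then obtain d1 t1 d2 t2 d3 t3 where
    l: "h1 \<subseteq> coord_line d1 t1" "h2 \<subseteq> coord_line d2 t2" "h3 \<subseteq> coord_line d3 t3"
    by (meson axis_segment_subset_coord_line)
  have cells: "\<And>T. T \<in> ?A \<Longrightarrow> \<exists>b. cell_box L T b"
    using rect_subsets_cell_box[OF fin ax] by blast
  consider "d2 = d1" "d3 = d1" | "d2 = d1" "d3 = (\<not> d1)" | "d3 = d1" "d2 = (\<not> d1)"
    | "d3 = d2" "d1 = (\<not> d2)"
    by (cases d1; cases d2; cases d3) auto
  then show ?thesis
  proof cases
    case 1
    obtain b where "cell_box L T0 b" using cells T0 by blast
    then have "box_frame T0 b" by (simp add: cell_box_def)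
    then have False
      using box_frame_no_parallel_triple[OF _ T0(2-4) distinct l(1)] l(2,3) 1 by blast
    then show ?thesis ..
  next
    case 2
    show ?thesis
      by (rule card_cell_boxes_through_segments_le_2
          [where h = h1 and h' = h2 and g = h3 and d = d1 and t = t1 and t' = t2 and s = t3,
           OF cells])
        (use distinct l 2 in auto)
  next
    case 3
    show ?thesis
      by (rule card_cell_boxes_through_segments_le_2
          [where h = h1 and h' = h3 and g = h2 and d = d1 and t = t1 and t' = t3 and s = t2,
           OF cells])
        (use distinct l 3 in auto)
  next
    case 4
    show ?thesis
      by (rule card_cell_boxes_through_segments_le_2
          [where h = h2 and h' = h3 and g = h1 and d = d2 and t = t2 and t' = t3 and s = t1,
           OF cells])
        (use distinct l 4 in auto)
  qed
qed

section \<open>The kernel bound\<close>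

lemma card_le_if_covered:
  assumes "finite D" "finite L'" "\<forall>S\<in>D. S \<inter> L' \<noteq> {}"
    and "\<And>m. m \<in> L' \<Longrightarrow> card {S \<in> D. m \<in> S} \<le> b"
  shows "card D \<le> card L' * b"
proof -
  have "card D \<le> card (\<Union>m\<in>L'. {S \<in> D. m \<in> S})"
    using assms(1-3) by (intro card_mono) auto
  also have "\<dots> \<le> (\<Sum>m\<in>L'. card {S \<in> D. m \<in> S})"
    using assms(2) by (rule card_UN_le)
  also have "\<dots> \<le> (\<Sum>m\<in>L'. b)" using assms(4) by (rule sum_mono)
  finally show ?thesis by simp
qed

lemma heavy_pair_sym: "heavy_pair k C l l' \<longleftrightarrow> heavy_pair k C l' l"
proof -
  have "{S \<in> C. l \<in> S \<and> l' \<in> S} = {S \<in> C. l' \<in> S \<and> l \<in> S}" by blast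
  then show ?thesis unfolding heavy_pair_def by auto
qed

lemma Union_reduce1_subset: "\<Union>(reduce1 k C) \<subseteq> \<Union>C"
proof
  fix x assume "x \<in> \<Union>(reduce1 k C)"
  then obtain S where S: "S \<in> reduce1 k C" "x \<in> S" by blast
  then consider "S \<in> C" | l l' where "heavy_pair k C l l'" "S = {l, l'}"
    unfolding reduce1_def by blast
  then show "x \<in> \<Union>C"
  proof cases
    case (2 l l')
    then have "card {T \<in> C. l \<in> T \<and> l' \<in> T} \<noteq> 0" by (simp add: heavy_pair_def)
    then obtain T where "T \<in> C" "l \<in> T" "l' \<in> T" by (metis (no_types, lifting) Collect_empty_eq card.empty)
    with 2(2) S(2) show ?thesis by blast
  qed (use S(2) in blast)
qed

lemma Union_reduce2_subset: "\<Union>(reduce2 k D) \<subseteq> \<Union>D"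
proof
  fix x assume "x \<in> \<Union>(reduce2 k D)"
  then obtain S where S: "S \<in> reduce2 k D" "x \<in> S" by blast
  then consider "S \<in> D" | l where "heavy_elem k D l" "S = {l}"
    unfolding reduce2_def by blast
  then show "x \<in> \<Union>D"
  proof cases
    case (2 l)
    then have "card {T \<in> D. l \<in> T} \<noteq> 0" by (simp add: heavy_elem_def)
    then obtain T where "T \<in> D" "l \<in> T" by (metis (no_types, lifting) Collect_empty_eq card.empty)
    with 2(2) S(2) show ?thesis by blast
  qed (use S(2) in blast)
qed

lemma reduce1_covered:
  assumes "finite C" "finite L'" "card L' \<le> k" "\<forall>S\<in>C. S \<inter> L' \<noteq> {}"
    and triple: "\<And>a b c. a \<noteq> b \<Longrightarrow> a \<noteq> c \<Longrightarrow> b \<noteq> c \<Longrightarrow>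
      card {S \<in> C. a \<in> S \<and> b \<in> S \<and> c \<in> S} \<le> 2"
  shows "\<forall>S\<in>reduce1 k C. S \<inter> L' \<noteq> {}"
proof
  fix S assume "S \<in> reduce1 k C"
  then consider "S \<in> C" | l l' where "heavy_pair k C l l'" "S = {l, l'}"
    unfolding reduce1_def by blast
  then show "S \<inter> L' \<noteq> {}"
  proof cases
    case 1
    with assms(4) show ?thesis by blast
  next
    case (2 l l')
    show ?thesis
    proof
      assume "S \<inter> L' = {}"
      then have "l \<notin> L'" "l' \<notin> L'" using 2(2) by auto
      have "card {S \<in> C. l \<in> S \<and> l' \<in> S} \<le> card L' * 2"
      proof (rule card_le_if_covered)
        fix m assume "m \<in> L'"
        with \<open>l \<notin> L'\<close> \<open>l' \<notin> L'\<close> 2(1) have "card {S \<in> C. l \<in> S \<and> l' \<in> S \<and> m \<in> S} \<le> 2"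
          by (intro triple) (auto simp: heavy_pair_def)
        moreover have "{T \<in> {S \<in> C. l \<in> S \<and> l' \<in> S}. m \<in> T} = {S \<in> C. l \<in> S \<and> l' \<in> S \<and> m \<in> S}"
          by auto
        ultimately show "card {T \<in> {S \<in> C. l \<in> S \<and> l' \<in> S}. m \<in> T} \<le> 2" by (simp only:)
      qed (use assms in auto)
      with 2(1) assms(3) show False unfolding heavy_pair_def by linarith
    qed
  qed
qed

lemma card_pair_reduce1_le:
  assumes "finite C" "0 < k" "l \<noteq> m"
  shows "card {S \<in> reduce1 k C. l \<in> S \<and> m \<in> S} \<le> 2 * k"
proof (cases "heavy_pair k C l m")
  case True
  then have "{S \<in> reduce1 k C. l \<in> S \<and> m \<in> S} \<subseteq> {{l, m}}"
    using assms(3) unfolding reduce1_def by (auto simp: doubleton_eq_iff)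
  then have "card {S \<in> reduce1 k C. l \<in> S \<and> m \<in> S} \<le> card {{l, m}}"
    by (intro card_mono) auto
  with assms(2) show ?thesis by simp
next
  case False
  then have "{S \<in> reduce1 k C. l \<in> S \<and> m \<in> S} \<subseteq> {S \<in> C. l \<in> S \<and> m \<in> S}"
    using assms(3) heavy_pair_sym[of k C l m] unfolding reduce1_def by (auto simp: doubleton_eq_iff)
  then have "card {S \<in> reduce1 k C. l \<in> S \<and> m \<in> S} \<le> card {S \<in> C. l \<in> S \<and> m \<in> S}"
    using assms(1) by (intro card_mono) auto
  with False assms(3) show ?thesis unfolding heavy_pair_def by linarith
qed

lemma heavy_elem_in_cover:
  assumes "finite D" "finite L'" "card L' \<le> k" "\<forall>S\<in>D. S \<inter> L' \<noteq> {}"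
    and pair: "\<And>l m. m \<in> L' \<Longrightarrow> l \<noteq> m \<Longrightarrow> card {S \<in> D. l \<in> S \<and> m \<in> S} \<le> 2 * k"
    and "heavy_elem k D l"
  shows "l \<in> L'"
proof (rule ccontr)
  assume "l \<notin> L'"
  have "card {S \<in> D. l \<in> S} \<le> card L' * (2 * k)"
  proof (rule card_le_if_covered)
    fix m assume "m \<in> L'"
    with \<open>l \<notin> L'\<close> have "card {S \<in> D. l \<in> S \<and> m \<in> S} \<le> 2 * k"
      by (intro pair) auto
    moreover have "{T \<in> {S \<in> D. l \<in> S}. m \<in> T} = {S \<in> D. l \<in> S \<and> m \<in> S}" by auto
    ultimately show "card {T \<in> {S \<in> D. l \<in> S}. m \<in> T} \<le> 2 * k" by (simp only:)
  qed (use assms in auto)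
  also have "\<dots> \<le> 2 * k ^ 2"
    using assms(3) by (simp add: power2_eq_square)
  finally show False using assms(6) unfolding heavy_elem_def by linarith
qed

lemma card_elem_reduce2_le:
  assumes "finite D" "0 < k"
  shows "card {S \<in> reduce2 k D. m \<in> S} \<le> 2 * k ^ 2"
proof (cases "heavy_elem k D m")
  case True
  then have "{S \<in> reduce2 k D. m \<in> S} \<subseteq> {{m}}"
    unfolding reduce2_def by auto
  then have "card {S \<in> reduce2 k D. m \<in> S} \<le> card {{m}}"
    by (intro card_mono) auto
  moreover have "1 \<le> k ^ 2" using assms(2) by (simp add: Suc_le_eq)
  ultimately show ?thesis by simp
next
  case False
  then have "{S \<in> reduce2 k D. m \<in> S} \<subseteq> {S \<in> D. m \<in> S}"
    unfolding reduce2_def by auto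
  then have "card {S \<in> reduce2 k D. m \<in> S} \<le> card {S \<in> D. m \<in> S}"
    using assms(1) by (intro card_mono) auto
  with False show ?thesis unfolding heavy_elem_def by linarith
qed

theorem card_reduce2_reduce1_le:
  assumes "finite (\<Union>C)" "finite L'" "card L' \<le> k" "\<forall>S\<in>C. S \<inter> L' \<noteq> {}"
    and "\<And>a b c. a \<noteq> b \<Longrightarrow> a \<noteq> c \<Longrightarrow> b \<noteq> c \<Longrightarrow>
      card {S \<in> C. a \<in> S \<and> b \<in> S \<and> c \<in> S} \<le> 2"
  shows "card (reduce2 k (reduce1 k C)) \<le> 2 * k ^ 3"
proof -
  define C1 where "C1 = reduce1 k C"
  define C2 where "C2 = reduce2 k C1"
  have "finite (\<Union>C1)"
    using finite_subset[OF Union_reduce1_subset assms(1)] unfolding C1_def .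
  moreover from this have "finite (\<Union>C2)"
    using finite_subset[OF Union_reduce2_subset] unfolding C2_def by blast
  ultimately have fin: "finite C" "finite C1" "finite C2"
    using assms(1) finite_UnionD by blast+
  have pos: "0 < k" if "m \<in> L'" for m
    using that assms(2,3) card_gt_0_iff[of L'] by auto
  have cov1: "\<forall>S\<in>C1. S \<inter> L' \<noteq> {}"
    unfolding C1_def using reduce1_covered fin(1) assms by blast
  have "l \<in> L'" if "heavy_elem k C1 l" for l
    using heavy_elem_in_cover[OF fin(2) assms(2,3) cov1 _ that]
      card_pair_reduce1_le[OF fin(1) pos] unfolding C1_def by blast
  then have cov2: "\<forall>S\<in>C2. S \<inter> L' \<noteq> {}"
    using cov1 unfolding C2_def reduce2_def by blast
  have "card C2 \<le> card L' * (2 * k ^ 2)"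
    using card_le_if_covered[OF fin(3) assms(2) cov2] card_elem_reduce2_le[OF fin(2) pos]
    unfolding C2_def by blast
  also have "\<dots> \<le> 2 * k ^ 3"
    using assms(3) by (simp add: power3_eq_cube power2_eq_square)
  finally show ?thesis unfolding C2_def C1_def .
qed

theorem lemma5:
  fixes L :: "point set set" and k :: nat
  assumes "finite L"
    and "\<forall>s\<in>L. axis_segment s"
    and "card (reduce2 k (reduce1 k (rect_subsets L))) > 2 * k ^ 3"
  shows "\<not> (\<exists>L'. is_cover L' (rect_subsets L) L \<and> card L' \<le> k)"
proof
  assume "\<exists>L'. is_cover L' (rect_subsets L) L \<and> card L' \<le> k"
  then obtain L' where L': "L' \<subseteq> L" "\<forall>S\<in>rect_subsets L. S \<inter> L' \<noteq> {}" "card L' \<le> k"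
    unfolding is_cover_def by blast
  have "card (reduce2 k (reduce1 k (rect_subsets L))) \<le> 2 * k ^ 3"
  proof (rule card_reduce2_reduce1_le[OF _ _ L'(3,2)])
    show "finite (\<Union>(rect_subsets L))"
      using assms(1) rect_subsets_subset by (meson Sup_least finite_subset)
    show "finite L'" using L'(1) assms(1) finite_subset by blast
  qed (use card_rect_subsets_through_three_le_2[OF assms(1,2)] in blast)
  with assms(3) show False by simp
qed

end
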